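(* Let $\mathcal{M}=[0,1]^2\subset\mathbb{R}^2$ with the Euclidean metric, let $k\ge 2$ be an integer, and let $P\subset\mathcal{M}$ be any set of $k$ points. Then $$GR_P\ \ge\ \frac{2}{\sqrt{3}}-\frac{C}{\sqrt{k}},\qquad\text{where } C=\frac{2^{3/2}}{3^{3/4}}.$$
   Context: For a metric space $(\mathcal{M},\delta)$ and a finite set $P\subset\mathcal{M}$ with $|P|\ge 2$, define $r_P=\min_{p,q\in P,\,p\neq q}\delta(p,q)/2$, $R_P=\sup_{x\in\mathcal{M}}\min_{p\in P}\delta(x,p)$, and the gap ratio $GR_P=R_P/r_P$. *)

theory Defs
  imports "HOL-Analysis.Analysis"
begin

definition packing_radius :: "'a::metric_space set \<Rightarrow> real" where
  "packing_radius P = (INF pq \<in> {(p, q). p \<in> P \<and> q \<in> P \<and> p \<noteq> q}. dist (fst pq) (snd pq)) / 2"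

definition covering_radius :: "'a::metric_space set \<Rightarrow> 'a set \<Rightarrow> real" where
  "covering_radius M P = (SUP x \<in> M. INF p \<in> P. dist x p)"

definition gap_ratio :: "'a::metric_space set \<Rightarrow> 'a set \<Rightarrow> real" where
  "gap_ratio M P = covering_radius M P / packing_radius P"

definition unit_square :: "(real \<times> real) set" where
  "unit_square = {0..1} \<times> {0..1}"

end

theory Submission
  imports Defs
begin

(*
  For any two points p, q of P at minimal distance, the midpoint of p and q
  is at distance at least d(p, q)/2 from every point of P (parallelogram law), so GR_P >= 1;
  this beats the claimed bound as long as k <= 16.

  For k >= 17, the pigeonhole principle on a 4 x 4 grid gives 2 r_P <= sqrt 2 / 4. Take the point
  p of P nearest to the centre of the square and a point z of the Voronoi cell of p (within the
  square) farthest from p. If z lies on the boundary of the square, z or the centre is at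
  distance >= 1/4 from P. Otherwise z is a vertex of the Voronoi diagram, equidistant from p and
  two further points of P; three points on a circle of radius rho have a pair at distance
  <= sqrt 3 * rho. Either way 2 r_P <= sqrt 3 * R_P, i.e. GR_P >= 2 / sqrt 3.
*)

lemma dist_midpoint_sq:
  fixes p q s :: "'a::real_inner"
  shows "(dist (midpoint p q) s)\<^sup>2 = ((dist s p)\<^sup>2 + (dist s q)\<^sup>2) / 2 - (dist p q)\<^sup>2 / 4"
  unfolding dist_norm midpoint_def power2_norm_eq_inner
  by (simp add: inner_simps inner_commute field_simps)

lemma sum_dist_sq_le_3_sum_dist_sq:
  fixes a b c z :: "'a::real_inner"
  shows "(dist a b)\<^sup>2 + (dist a c)\<^sup>2 + (dist b c)\<^sup>2 \<le> 3 * ((dist z a)\<^sup>2 + (dist z b)\<^sup>2 + (dist z c)\<^sup>2)"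
proof -
  have "(dist a b)\<^sup>2 + (dist a c)\<^sup>2 + (dist b c)\<^sup>2 + (norm (a + b + c - 3 *\<^sub>R z))\<^sup>2
      = 3 * ((dist z a)\<^sup>2 + (dist z b)\<^sup>2 + (dist z c)\<^sup>2)"
    unfolding dist_norm power2_norm_eq_inner
    by (simp add: inner_simps inner_commute algebra_simps)
  then show ?thesis by (smt (verit) zero_le_power2)
qed

lemma dist_add_scaleR_sq:
  fixes z t q :: "'a::real_inner"
  shows "(dist (z + s *\<^sub>R t) q)\<^sup>2 = (dist z q)\<^sup>2 + 2 * s * inner (z - q) t + s\<^sup>2 * (norm t)\<^sup>2"
  unfolding dist_norm power2_norm_eq_inner
  by (simp add: inner_simps inner_commute algebra_simps power2_eq_square)

lemma min_dist_le_sqrt3_circumradius: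
  fixes a b c z :: "'a::real_inner"
  assumes "dist z a = \<rho>" "dist z b = \<rho>" "dist z c = \<rho>"
    and "d \<le> dist a b" "d \<le> dist a c" "d \<le> dist b c"
  shows "d \<le> sqrt 3 * \<rho>"
proof (cases "d \<le> 0")
  case True
  moreover have "0 \<le> sqrt 3 * \<rho>" using assms(1) by auto
  ultimately show ?thesis by linarith
next
  case False
  then have "d\<^sup>2 \<le> (dist a b)\<^sup>2" "d\<^sup>2 \<le> (dist a c)\<^sup>2" "d\<^sup>2 \<le> (dist b c)\<^sup>2"
    using assms(4-6) by (auto intro!: power_mono)
  then have "d\<^sup>2 \<le> 3 * \<rho>\<^sup>2"
    using sum_dist_sq_le_3_sum_dist_sq[of a b c z] unfolding assms(1-3) by simp
  then have "d\<^sup>2 \<le> (sqrt 3 * \<rho>)\<^sup>2" by (simp add: power_mult_distrib)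
  moreover have "0 \<le> \<rho>" using assms(1) by auto
  ultimately show ?thesis by (simp add: power2_le_iff_abs_le)
qed

lemma packing_radius_finite:
  fixes P :: "'a::metric_space set"
  assumes "finite P" "a \<in> P" "b \<in> P" "a \<noteq> b"
  obtains p q where "p \<in> P" "q \<in> P" "p \<noteq> q" "2 * packing_radius P = dist p q"
    "\<And>x y. x \<in> P \<Longrightarrow> y \<in> P \<Longrightarrow> x \<noteq> y \<Longrightarrow> dist p q \<le> dist x y"
proof -
  define S where "S = {(p, q). p \<in> P \<and> q \<in> P \<and> p \<noteq> q}"
  define D where "D = (\<lambda>pq. dist (fst pq) (snd pq)) ` S"
  have "finite S"
    by (rule finite_subset[of _ "P \<times> P"]) (use assms(1) S_def in auto)
  moreover have "(a, b) \<in> S" using assms S_def by simp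
  ultimately have D: "finite D" "D \<noteq> {}" unfolding D_def by auto
  have "Min D \<in> D" using D by (rule Min_in)
  then obtain p q where pq: "(p, q) \<in> S" "Min D = dist p q" unfolding D_def by auto
  have "2 * packing_radius P = Min D"
    using cInf_eq_Min[OF D] unfolding packing_radius_def D_def S_def by simp
  moreover have "Min D \<le> dist x y" if "x \<in> P" "y \<in> P" "x \<noteq> y" for x y
  proof (rule Min_le[OF D(1)])
    show "dist x y \<in> D" unfolding D_def S_def using that by (auto intro!: image_eqI[of _ _ "(x, y)"])
  qed
  ultimately show ?thesis using that[of p q] pq unfolding S_def by auto
qed

lemma infdist_greatest:
  "A \<noteq> {} \<Longrightarrow> (\<And>a. a \<in> A \<Longrightarrow> d \<le> dist x a) \<Longrightarrow> d \<le> infdist x A"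
  by (simp add: infdist_notempty cINF_greatest)

lemma infdist_le_covering_radius:
  fixes M P :: "'a::metric_space set"
  assumes "bounded M" "P \<noteq> {}" "P \<subseteq> M" "x \<in> M"
  shows "infdist x P \<le> covering_radius M P"
proof -
  obtain p where p: "p \<in> P" using assms(2) by blast
  obtain c e where ce: "\<And>y. y \<in> M \<Longrightarrow> dist c y \<le> e"
    using assms(1) unfolding bounded_def by blast
  have "bdd_above ((\<lambda>y. infdist y P) ` M)"
  proof (rule bdd_aboveI2)
    fix y assume "y \<in> M"
    then have "dist y p \<le> 2 * e"
      using ce[of y] ce[of p] p assms(3) dist_triangle3[of y p c] by auto
    then show "infdist y P \<le> 2 * e" by (rule infdist_le2[OF p])
  qed
  then have "infdist x P \<le> (SUP y\<in>M. infdist y P)" by (rule cSUP_upper[OF assms(4)])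
  then show ?thesis unfolding covering_radius_def infdist_notempty[OF assms(2)] .
qed

lemma gap_ratio_ge_1:
  fixes M P :: "'a::real_inner set"
  assumes "convex M" "bounded M" "finite P" "P \<subseteq> M" "a \<in> P" "b \<in> P" "a \<noteq> b"
  shows "1 \<le> gap_ratio M P"
proof -
  obtain p q where pq: "p \<in> P" "q \<in> P" "p \<noteq> q" and d: "2 * packing_radius P = dist p q"
    and dmin: "\<And>x y. x \<in> P \<Longrightarrow> y \<in> P \<Longrightarrow> x \<noteq> y \<Longrightarrow> dist p q \<le> dist x y"
    using packing_radius_finite[OF assms(3,5-7)] by metis
  have "dist p q / 2 \<le> dist (midpoint p q) s" if s: "s \<in> P" for s
  proof -
    have sp: "(dist p q)\<^sup>2 \<le> (dist s p)\<^sup>2" if "s \<noteq> p"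
      using dmin[OF s pq(1) that] by (intro power_mono) auto
    have sq: "(dist p q)\<^sup>2 \<le> (dist s q)\<^sup>2" if "s \<noteq> q"
      using dmin[OF s pq(2) that] by (intro power_mono) auto
    have "(dist p q)\<^sup>2 \<le> (dist s p)\<^sup>2 + (dist s q)\<^sup>2"
    proof (cases "s = p")
      case True
      then show ?thesis using pq(3) by (simp add: dist_commute)
    next
      case False
      then show ?thesis using sp sq by (cases "s = q") (auto simp: add_increasing2)
    qed
    then have "(dist p q / 2)\<^sup>2 \<le> (dist (midpoint p q) s)\<^sup>2"
      unfolding dist_midpoint_sq by (simp add: power_divide)
    then show ?thesis by (simp add: power2_le_iff_abs_le)
  qed
  then have "dist p q / 2 \<le> infdist (midpoint p q) P"
    using pq(1) by (intro infdist_greatest) auto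
  moreover have "midpoint p q \<in> M"
    using closed_segment_subset[OF _ _ assms(1)] midpoint_in_closed_segment pq assms(4) by blast
  ultimately have "packing_radius P \<le> covering_radius M P"
    using infdist_le_covering_radius[OF assms(2) _ assms(4), of "midpoint p q"] pq d by force
  moreover have "0 < packing_radius P" using d pq(3) zero_less_dist_iff[of p q] by linarith
  ultimately show ?thesis unfolding gap_ratio_def by simp
qed

definition voronoi_cell :: "'a::metric_space set \<Rightarrow> 'a \<Rightarrow> 'a set" where
  "voronoi_cell P p = {y. \<forall>q\<in>P. dist y p \<le> dist y q}"

lemma closed_voronoi_cell: "closed (voronoi_cell P p)"
proof -
  have "voronoi_cell P p = (\<Inter>q\<in>P. {y. dist y p \<le> dist y q})"
    unfolding voronoi_cell_def by blast
  then show ?thesis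
    by (simp add: closed_INT closed_Collect_le continuous_on_dist continuous_on_id continuous_on_const)
qed

lemma infdist_voronoi_cell:
  assumes "p \<in> P" "y \<in> voronoi_cell P p"
  shows "infdist y P = dist y p"
proof (rule antisym)
  show "infdist y P \<le> dist y p" by (rule infdist_le[OF assms(1)])
  show "dist y p \<le> infdist y P"
    using assms by (intro infdist_greatest) (auto simp: voronoi_cell_def)
qed

lemma voronoi_cell_move_away:
  fixes z p t :: "'a::real_inner"
  assumes "finite P" "p \<in> P" "z \<in> interior M" "z \<in> voronoi_cell P p" "t \<noteq> 0"
    and orth: "\<And>q. q \<in> P \<Longrightarrow> dist z q = dist z p \<Longrightarrow> inner (q - p) t = 0"
  obtains z' where "z' \<in> M \<inter> voronoi_cell P p" "dist z p < dist z' p"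
proof -
  \<comment> \<open>u = \<plusminus>t, oriented so that moving along u increases the distance to p\<close>
  obtain u where u: "u \<noteq> 0" "0 \<le> inner (z - p) u"
    and orth_u: "\<And>q. q \<in> P \<Longrightarrow> dist z q = dist z p \<Longrightarrow> inner (q - p) u = 0"
  proof (cases "0 \<le> inner (z - p) t")
    case True
    then show ?thesis using that[of t] assms(5) orth by blast
  next
    case False
    then show ?thesis using that[of "- t"] assms(5) orth by fastforce
  qed
  define z' where "z' s = z + s *\<^sub>R u" for s :: real
  have z'_to_z: "(z' \<longlongrightarrow> z) (at_right 0)"
    unfolding z'_def by (auto intro!: tendsto_eq_intros)
  have "eventually (\<lambda>s. z' s \<in> M) (at_right 0)"
    using topological_tendstoD[OF z'_to_z open_interior assms(3)]
    by (rule eventually_mono) (use interior_subset in blast)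
  moreover have "eventually (\<lambda>s. \<forall>q\<in>P. dist z p < dist z q \<longrightarrow> dist (z' s) p < dist (z' s) q) (at_right 0)"
  proof (rule eventually_ball_finite[OF assms(1)], intro ballI)
    fix q assume "q \<in> P"
    show "eventually (\<lambda>s. dist z p < dist z q \<longrightarrow> dist (z' s) p < dist (z' s) q) (at_right 0)"
    proof (cases "dist z p < dist z q")
      case True
      have "((\<lambda>s. dist (z' s) q - dist (z' s) p) \<longlongrightarrow> dist z q - dist z p) (at_right 0)"
        by (intro tendsto_intros z'_to_z)
      from order_tendstoD(1)[OF this, of 0] True show ?thesis by (auto elim: eventually_mono)
    qed simp
  qed
  ultimately obtain s where s: "0 < s" "z' s \<in> M"
    and strict: "\<And>q. q \<in> P \<Longrightarrow> dist z p < dist z q \<Longrightarrow> dist (z' s) p < dist (z' s) q"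
    using eventually_happens'[OF trivial_limit_at_right_real
        eventually_conj[OF eventually_at_right_less eventually_conj]] by blast
  have sq: "(dist (z' s) q)\<^sup>2 = (dist z q)\<^sup>2 + 2 * s * inner (z - q) u + s\<^sup>2 * (norm u)\<^sup>2" for q
    unfolding z'_def by (rule dist_add_scaleR_sq)
  have "dist (z' s) p \<le> dist (z' s) q" if q: "q \<in> P" for q
  proof (cases "dist z q = dist z p")
    case True
    have "inner (z - q) u = inner (z - p) u"
      using orth_u[OF q True] by (simp add: inner_diff_left)
    then have "(dist (z' s) q)\<^sup>2 = (dist (z' s) p)\<^sup>2" using sq[of q] sq[of p] True by simp
    then show ?thesis by simp
  next
    case False
    then show ?thesis
      using strict[OF q] assms(4) q unfolding voronoi_cell_def by fastforce
  qed
  then have cell: "z' s \<in> M \<inter> voronoi_cell P p" using s(2) unfolding voronoi_cell_def by blast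
  have "0 < s\<^sup>2 * (norm u)\<^sup>2" "0 \<le> 2 * s * inner (z - p) u"
    using s(1) u by simp_all
  then have "(dist z p)\<^sup>2 < (dist (z' s) p)\<^sup>2" using sq[of p] by linarith
  then have "dist z p < dist (z' s) p" by (simp add: power_less_imp_less_base)
  then show ?thesis by (rule that[OF cell])
qed

lemma exists_orthogonal_nonzero:
  fixes v :: "real \<times> real"
  obtains t where "t \<noteq> 0" "inner v t = 0"
proof (cases "v = 0")
  case True
  then show ?thesis using that[of "(1, 0)"] by (simp add: zero_prod_def)
next
  case False
  then show ?thesis using that[of "(- snd v, fst v)"] by (cases v) (auto simp: zero_prod_def algebra_simps)
qed

lemma voronoi_cell_farthest_point_is_vertex:
  fixes P M :: "(real \<times> real) set"
  assumes "finite P" "p \<in> P" "z \<in> interior M \<inter> voronoi_cell P p"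
    and farthest: "\<And>y. y \<in> M \<inter> voronoi_cell P p \<Longrightarrow> dist y p \<le> dist z p"
  shows "\<exists>q\<in>P. \<exists>r\<in>P. q \<noteq> p \<and> r \<noteq> p \<and> q \<noteq> r \<and> dist z q = dist z p \<and> dist z r = dist z p"
proof (rule ccontr)
  assume "\<not> ?thesis"
  then obtain q0 where q0: "\<And>q. q \<in> P \<Longrightarrow> dist z q = dist z p \<Longrightarrow> q = p \<or> q = q0" by blast
  obtain t where "t \<noteq> 0" "inner (q0 - p) t = 0" by (rule exists_orthogonal_nonzero)
  then have "\<And>q. q \<in> P \<Longrightarrow> dist z q = dist z p \<Longrightarrow> inner (q - p) t = 0"
    using q0 by fastforce
  with assms(1-3) \<open>t \<noteq> 0\<close> obtain z' where "z' \<in> M \<inter> voronoi_cell P p" "dist z p < dist z' p"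
    by (metis IntD1 IntD2 voronoi_cell_move_away)
  then show False using farthest by fastforce
qed

lemma compact_unit_square: "compact unit_square"
  unfolding unit_square_def by (intro compact_Times compact_Icc)

lemma convex_unit_square: "convex unit_square"
  unfolding unit_square_def by (intro convex_Times convex_real_interval)

lemma unit_square_boundary_far_from_centre:
  assumes "z \<in> unit_square" "z \<notin> interior unit_square"
  shows "1/2 \<le> dist z (1/2, 1/2)"
proof -
  have "fst z \<in> {0, 1} \<or> snd z \<in> {0, 1}"
    using assms unfolding unit_square_def interior_Times by (cases z) auto
  moreover have "dist (fst z) (1/2) \<le> dist z (1/2, 1/2)" "dist (snd z) (1/2) \<le> dist z (1/2, 1/2)"
    using dist_fst_le[of z "(1/2, 1/2)"] dist_snd_le[of z "(1/2, 1/2)"] by simp_all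
  ultimately show ?thesis by (auto simp: dist_real_def)
qed

lemma unit_square_far_point:
  fixes P :: "(real \<times> real) set"
  assumes "finite P" "P \<noteq> {}" and sep: "\<And>p q. p \<in> P \<Longrightarrow> q \<in> P \<Longrightarrow> p \<noteq> q \<Longrightarrow> d \<le> dist p q"
  shows "\<exists>w\<in>unit_square. d \<le> sqrt 3 * infdist w P \<or> 1/4 \<le> infdist w P"
proof -
  define c :: "real \<times> real" where "c = (1/2, 1/2)"
  have c: "c \<in> unit_square" unfolding c_def unit_square_def by simp
  obtain p where "p \<in> P" "infdist c P = dist c p"
    using infdist_attains_inf[of P c] assms(1,2) finite_imp_closed by blast
  then have p: "p \<in> P" "c \<in> voronoi_cell P p"
    unfolding voronoi_cell_def using infdist_le[of _ P c] by auto
  define K where "K = unit_square \<inter> voronoi_cell P p"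
  have "compact K"
    unfolding K_def by (intro compact_Int_closed compact_unit_square closed_voronoi_cell)
  moreover have "c \<in> K" using c p(2) K_def by blast
  moreover have "continuous_on K (\<lambda>y. dist y p)" by (intro continuous_intros)
  ultimately obtain z where z: "z \<in> K" and farthest: "\<And>y. y \<in> K \<Longrightarrow> dist y p \<le> dist z p"
    using continuous_attains_sup[of K "\<lambda>y. dist y p"] by blast
  have infdist_z: "infdist z P = dist z p" and infdist_c: "infdist c P = dist c p"
    using infdist_voronoi_cell p z unfolding K_def by auto
  show ?thesis
  proof (cases "z \<in> interior unit_square")
    case True
    then obtain q r where "q \<in> P" "r \<in> P" "q \<noteq> p" "r \<noteq> p" "q \<noteq> r"
      "dist z q = dist z p" "dist z r = dist z p"
      using voronoi_cell_farthest_point_is_vertex[OF assms(1) p(1), of z unit_square]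
        z farthest unfolding K_def by blast
    then have "d \<le> sqrt 3 * dist z p"
      by (intro min_dist_le_sqrt3_circumradius[of z p _ q r]) (auto intro: sep p(1))
    then show ?thesis using infdist_z z unfolding K_def by (metis IntD1)
  next
    case False
    then have "1/2 \<le> dist z c"
      using unit_square_boundary_far_from_centre z unfolding K_def c_def by blast
    also have "dist z c \<le> dist z p + dist c p" by (rule dist_triangle2)
    finally have "1/4 \<le> infdist z P \<or> 1/4 \<le> infdist c P"
      unfolding infdist_z infdist_c by linarith
    then show ?thesis using c z unfolding K_def by blast
  qed
qed

lemma grid_index_bounds:
  fixes x :: real
  assumes "0 < n" "0 \<le> x" "x \<le> 1"
  shows "real (min (n - 1) (nat \<lfloor>n * x\<rfloor>)) \<le> n * x"
    and "n * x \<le> real (min (n - 1) (nat \<lfloor>n * x\<rfloor>)) + 1"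
proof -
  have "real (nat \<lfloor>n * x\<rfloor>) = of_int \<lfloor>n * x\<rfloor>" using assms by simp
  then have floor: "real (nat \<lfloor>n * x\<rfloor>) \<le> n * x" "n * x < real (nat \<lfloor>n * x\<rfloor>) + 1"
    by linarith+
  have "n * x \<le> real (n - 1) + 1" using assms mult_left_le[of x "real n"] by (simp add: of_nat_diff)
  then show "real (min (n - 1) (nat \<lfloor>n * x\<rfloor>)) \<le> n * x"
    and "n * x \<le> real (min (n - 1) (nat \<lfloor>n * x\<rfloor>)) + 1"
    using floor by (auto simp: min_def)
qed

lemma unit_square_pigeonhole:
  fixes P :: "(real \<times> real) set" and n :: nat
  assumes "finite P" "P \<subseteq> unit_square" "0 < n" "n\<^sup>2 < card P"
  obtains p q where "p \<in> P" "q \<in> P" "p \<noteq> q" "dist p q \<le> sqrt 2 / n"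
proof -
  define cell :: "real \<Rightarrow> nat" where "cell x = min (n - 1) (nat \<lfloor>real n * x\<rfloor>)" for x :: real
  have close: "dist x y \<le> 1 / n" if "x \<in> {0..1}" "y \<in> {0..1}" "cell x = cell y" for x y
  proof -
    have "\<bar>n * x - n * y\<bar> \<le> 1"
      using grid_index_bounds[of n x] grid_index_bounds[of n y] that assms(3)
      unfolding cell_def by (auto simp: abs_le_iff)
    also have "\<bar>n * x - n * y\<bar> = n * dist x y"
      by (simp add: dist_real_def abs_mult flip: right_diff_distrib)
    finally show ?thesis using assms(3) by (simp add: field_simps)
  qed
  have "(\<lambda>p. (cell (fst p), cell (snd p))) ` P \<subseteq> {..<n} \<times> {..<n}"
    using assms(3) unfolding cell_def by auto
  then have "\<not> inj_on (\<lambda>p. (cell (fst p), cell (snd p))) P"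
    using card_inj_on_le[of _ P "{..<n} \<times> {..<n}"] assms(4) by (auto simp: power2_eq_square)
  then obtain p q where pq: "p \<in> P" "q \<in> P" "p \<noteq> q"
    and "cell (fst p) = cell (fst q)" "cell (snd p) = cell (snd q)"
    unfolding inj_on_def by auto
  have "dist (fst p) (fst q) \<le> 1 / n" "dist (snd p) (snd q) \<le> 1 / n"
  proof -
    have "fst p \<in> {0..1}" "snd p \<in> {0..1}" "fst q \<in> {0..1}" "snd q \<in> {0..1}"
      using assms(2) pq(1,2) unfolding unit_square_def by (auto simp: mem_Times_iff)
    then show "dist (fst p) (fst q) \<le> 1 / n" "dist (snd p) (snd q) \<le> 1 / n"
      using close \<open>cell (fst p) = cell (fst q)\<close> \<open>cell (snd p) = cell (snd q)\<close> by blast+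
  qed
  then have "dist p q \<le> sqrt ((1 / n)\<^sup>2 + (1 / n)\<^sup>2)"
    unfolding dist_prod_def by (intro real_sqrt_le_mono add_mono power_mono) auto
  also have "\<dots> = sqrt 2 / n" by (simp add: real_sqrt_mult real_sqrt_divide)
  finally show ?thesis using pq that by blast
qed

lemma unit_square_gap_ratio_ge:
  fixes P :: "(real \<times> real) set"
  assumes "finite P" "P \<subseteq> unit_square" "17 \<le> card P"
  shows "2 / sqrt 3 \<le> gap_ratio unit_square P"
proof -
  obtain a b where ab: "a \<in> P" "b \<in> P" "a \<noteq> b" "dist a b \<le> sqrt 2 / 4"
    by (rule unit_square_pigeonhole[OF assms(1,2), of 4]) (use assms(3) in simp_all)
  obtain p q where pq: "p \<in> P" "q \<in> P" "p \<noteq> q" and d: "2 * packing_radius P = dist p q"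
    and sep: "\<And>x y. x \<in> P \<Longrightarrow> y \<in> P \<Longrightarrow> x \<noteq> y \<Longrightarrow> dist p q \<le> dist x y"
    using packing_radius_finite[OF assms(1) ab(1-3)] by metis
  obtain w where w: "w \<in> unit_square"
    and far: "dist p q \<le> sqrt 3 * infdist w P \<or> 1/4 \<le> infdist w P"
    using unit_square_far_point[OF assms(1) _ sep] pq(1) by blast
  have "dist p q \<le> sqrt 3 / 4"
    using sep[OF ab(1-3)] ab(4) real_sqrt_le_mono[of 2 3] by linarith
  moreover have "sqrt 3 / 4 \<le> sqrt 3 * infdist w P" if "1/4 \<le> infdist w P"
    using mult_left_mono[OF that, of "sqrt 3"] by simp
  ultimately have "dist p q \<le> sqrt 3 * infdist w P" using far by linarith
  also have "\<dots> \<le> sqrt 3 * covering_radius unit_square P"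
    using infdist_le_covering_radius[OF compact_imp_bounded[OF compact_unit_square] _ assms(2) w] pq(1)
    by (intro mult_left_mono) auto
  finally have "2 * packing_radius P \<le> sqrt 3 * covering_radius unit_square P" using d by simp
  moreover have "0 < packing_radius P" using d pq(3) zero_less_dist_iff[of p q] by linarith
  ultimately show ?thesis unfolding gap_ratio_def by (simp add: le_divide_eq divide_le_eq mult.commute)
qed

lemma two_div_sqrt3_minus_le_1:
  assumes "0 < k" "k \<le> 16"
  shows "2 / sqrt 3 - (2 powr (3/2) / 3 powr (3/4)) / sqrt (real k) \<le> 1"
proof -
  define C :: real where "C = 2 powr (3/2) / 3 powr (3/4)"
  have "2 \<le> 2 powr (3/2 :: real)" using powr_mono[of 1 "3/2" "2::real"] by simp
  moreover have "3 powr (3/4 :: real) \<le> 3" using powr_mono[of "3/4" 1 "3::real"] by simp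
  ultimately have C: "2 / 3 \<le> C" unfolding C_def by (intro frac_le) auto
  have "sqrt (real k) \<le> 4" using assms real_sqrt_le_mono[of k 16] by simp
  then have "C / 4 \<le> C / sqrt (real k)"
    using assms C by (intro divide_left_mono) auto
  moreover have "2 / sqrt 3 \<le> 7 / 6"
    using real_le_rsqrt[of "12/7" 3] by (simp add: field_simps power_divide)
  ultimately show ?thesis using C unfolding C_def[symmetric] by linarith
qed

theorem lemma2:
  fixes P :: "(real \<times> real) set" and k :: nat
  assumes "k \<ge> 2" and "finite P" and "card P = k" and "P \<subseteq> unit_square"
  shows "gap_ratio unit_square P \<ge> 2 / sqrt 3 - (2 powr (3/2) / 3 powr (3/4)) / sqrt (real k)"
proof (cases "k \<le> 16")
  case True
  have "\<not> card P \<le> Suc 0" using assms(1,3) by simp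
  then obtain a b where "a \<in> P" "b \<in> P" "a \<noteq> b"
    using card_le_Suc0_iff_eq[OF assms(2)] by blast
  then have "1 \<le> gap_ratio unit_square P"
    using gap_ratio_ge_1[OF convex_unit_square compact_imp_bounded[OF compact_unit_square] assms(2,4)]
    by blast
  then show ?thesis using two_div_sqrt3_minus_le_1[OF _ True] assms(1) by linarith
next
  case False
  then have "2 / sqrt 3 \<le> gap_ratio unit_square P"
    using unit_square_gap_ratio_ge[OF assms(2,4)] assms(3) by linarith
  moreover have "0 \<le> (2 powr (3/2) / 3 powr (3/4)) / sqrt (real k)" by simp
  ultimately show ?thesis by linarith
qed

end
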